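(* Let $(X,\mu)$ be any measure space, let $N\geq 2$ be an integer, and let $f_1,\dots,f_N$ be non-negative measurable functions on $X$ with $0<\sum_{j=1}^N \|f_j\|_p^p<\infty$. Define $$\widetilde{\Gamma}_p(f_1,\dots,f_N) := \frac{\binom{N}{2}^{-1}\sum_{1\le i< j\le N} \|f_if_j\|_{p/2}^{p/2}}{\frac1N \sum_{j=1}^N \|f_j\|_p^p}.$$ Then for all $p\in(2,\infty)$, $$\Big\|\sum_{j=1}^N f_j\Big\|_p^p \leq \Big[\,1 + (N-1)\,\widetilde{\Gamma}_p(f_1,\dots,f_N)^{1/(p-1)}\Big]^{p-1}\sum_{j=1}^N \|f_j\|_p^p,$$ and for all $p\in(1,2)$ the reverse inequality ($\geq$) holds.
   Context: For any real $q\neq 0$ and measurable $f$, $\|f\|_q := \left(\int |f|^q\,d\mu\right)^{1/q}$ (used even when $q<1$). *)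

theory Defs
  imports "HOL-Analysis.Analysis"
begin

text \<open>It is taken as a real number
  (the integral is always finite in the statement, by the hypotheses).\<close>
definition lpow :: "'a measure \<Rightarrow> real \<Rightarrow> ('a \<Rightarrow> real) \<Rightarrow> real" where
  "lpow M q g = enn2real (\<integral>\<^sup>+ x. ennreal (\<bar>g x\<bar> powr q) \<partial>M)"

definition Gamma_tilde :: "'a measure \<Rightarrow> real \<Rightarrow> nat \<Rightarrow> (nat \<Rightarrow> 'a \<Rightarrow> real) \<Rightarrow> real" where
  "Gamma_tilde M p N f =
     ((\<Sum>i\<in>{1..N}. \<Sum>j\<in>{i<..N}. lpow M (p/2) (\<lambda>x. f i x * f j x)) / real (N choose 2))
     / ((\<Sum>j\<in>{1..N}. lpow M p (f j)) / real N)"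

end

(*
  Let S = x_1 + ... + x_N with x_j >= 0, and give the pair (i, j) the weight c_ij = theta if i = j
  and c_ij = (1 - theta) / (N - 1) otherwise; by AM-GM, sum_ij c_ij sqrt (x_i x_j) <= S.
  Expand S^p = sum_ij x_i x_j S^(p-2). For p > 2 each term is a weighted geometric mean of
  c_ij^(2-p) (x_i x_j)^(p/2) and c_ij sqrt (x_i x_j) S^(p-1); for 1 < p < 2 it is instead
  c_ij^(2-p) (x_i x_j)^(p/2) that is a weighted geometric mean of the other two. Young's inequality
  and the weight bound therefore give
    S^p <= theta^(2-p) sum_j x_j^p + ((1 - theta) / (N - 1))^(2-p) sum_(i ~= j) (x_i x_j)^(p/2)
  for p > 2, and the reverse inequality for 1 < p < 2. Integrating with x_j = f_j(x) yields
  ||sum_j f_j||_p^p <= (theta^(2-p) + (1 - theta)^(2-p) (N - 1)^(p-1) Gamma) sum_j ||f_j||_p^p,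
  and theta = 1 / K with K = 1 + (N - 1) Gamma^(1/(p-1)) makes the bracket equal to K^(p-1).
*)

theory Submission
  imports Defs
begin

section \<open>A pointwise inequality for finite sums\<close>

lemma young_interpolation_gt2:
  fixes p c w S :: real
  assumes p: "2 < p" and c: "0 < c" and w: "0 \<le> w" and S: "0 < S"
  shows "w * S powr (p - 2)
           \<le> (c powr (2 - p) * w powr (p / 2) + (p - 2) * (c * sqrt w * S powr (p - 1))) / (p - 1)"
proof (cases "w = 0")
  case False
  with w have w: "0 < w" by simp
  define r where "r = 1 / (p - 1)"
  define B where "B = c powr (2 - p) * w powr (p / 2)"
  define C where "C = c * sqrt w * S powr (p - 1)"
  have "B powr r * C powr (1 - r)
      = c powr ((2 - p) * r + (1 - r)) * w powr (p / 2 * r + (1 - r) / 2) * S powr ((p - 1) * (1 - r))"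
    using c w S by (simp add: B_def C_def powr_mult powr_powr powr_add powr_half_sqrt[symmetric])
  also have "\<dots> = w * S powr (p - 2)"
  proof -
    have r: "r * (p - 1) = 1"
      using p by (simp add: r_def)
    have "(2 - p) * r + (1 - r) = 0" "p / 2 * r + (1 - r) / 2 = 1" "(p - 1) * (1 - r) = p - 2"
      using r by (simp_all add: field_simps)
    then show ?thesis using c w by simp
  qed
  finally have "w * S powr (p - 2) = B powr r * C powr (1 - r)" ..
  also have "\<dots> \<le> r * B + (1 - r) * C"
    using p c w S by (intro Youngs_inequality_0) (auto simp: r_def B_def C_def field_simps)
  also have "\<dots> = (B + (p - 2) * C) / (p - 1)"
  proof -
    have "1 - r = (p - 2) / (p - 1)"
      using p by (simp add: r_def field_simps)
    then show ?thesis
      by (simp add: r_def add_divide_distrib)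
  qed
  finally show ?thesis
    by (simp only: B_def C_def)
qed (use p c S in simp)

lemma young_interpolation_lt2:
  fixes p c w S :: real
  assumes p: "1 < p" "p < 2" and c: "0 \<le> c" and w: "0 \<le> w" and S: "0 < S"
  shows "c powr (2 - p) * w powr (p / 2)
           \<le> (p - 1) * (w * S powr (p - 2)) + (2 - p) * (c * sqrt w * S powr (p - 1))"
proof (cases "c = 0 \<or> w = 0")
  case False
  with c w have c: "0 < c" and w: "0 < w" by auto
  define A where "A = w * S powr (p - 2)"
  define C where "C = c * sqrt w * S powr (p - 1)"
  have "A powr (p - 1) * C powr (2 - p)
      = c powr (2 - p) * w powr ((p - 1) + (2 - p) / 2) * S powr ((p - 2) * (p - 1) + (p - 1) * (2 - p))"
    using c w S by (simp add: A_def C_def powr_mult powr_powr powr_add powr_half_sqrt[symmetric])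
  also have "\<dots> = c powr (2 - p) * w powr (p / 2)"
    using S by (simp add: field_simps)
  finally have "c powr (2 - p) * w powr (p / 2) = A powr (p - 1) * C powr (2 - p)" ..
  also have "\<dots> \<le> (p - 1) * A + (2 - p) * C"
    using p c w S by (intro Youngs_inequality_0) (auto simp: A_def C_def)
  finally show ?thesis
    by (simp only: A_def C_def)
qed (use p c w S in \<open>auto intro!: add_nonneg_nonneg mult_nonneg_nonneg\<close>)

lemma powr_sum_eq_pair_sum:
  fixes x :: "'i \<Rightarrow> real"
  assumes "0 < (\<Sum>i\<in>I. x i)"
  shows "(\<Sum>i\<in>I. x i) powr p = (\<Sum>i\<in>I. \<Sum>j\<in>I. x i * x j * (\<Sum>i\<in>I. x i) powr (p - 2))"
    (is "?S powr p = _")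
proof -
  have "?S powr p = ?S ^ 2 * ?S powr (p - 2)"
    using assms by (simp add: powr_add[symmetric] flip: powr_numeral)
  also have "?S ^ 2 = (\<Sum>i\<in>I. \<Sum>j\<in>I. x i * x j)"
    by (simp add: power2_eq_square sum_product)
  finally show ?thesis
    by (simp add: sum_distrib_right)
qed

lemma powr_minus_one_mult_le:
  fixes S W :: real
  assumes "0 < S" "W \<le> S"
  shows "S powr (p - 1) * W \<le> S powr p"
proof -
  have "S powr (p - 1) * W \<le> S powr (p - 1) * S"
    using assms by (intro mult_left_mono) auto
  also have "\<dots> = S powr p"
    using assms by (simp add: powr_mult_base mult.commute)
  finally show ?thesis .
qed

lemma powr_sum_le_weighted_pair_sum:
  fixes x :: "'i \<Rightarrow> real" and c :: "'i \<Rightarrow> 'i \<Rightarrow> real"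
  assumes p: "2 < p"
    and x: "\<And>i. i \<in> I \<Longrightarrow> 0 \<le> x i" and c: "\<And>i j. i \<in> I \<Longrightarrow> j \<in> I \<Longrightarrow> 0 < c i j"
    and weights: "(\<Sum>i\<in>I. \<Sum>j\<in>I. c i j * sqrt (x i * x j)) \<le> (\<Sum>i\<in>I. x i)"
  shows "(\<Sum>i\<in>I. x i) powr p \<le> (\<Sum>i\<in>I. \<Sum>j\<in>I. c i j powr (2 - p) * (x i * x j) powr (p / 2))"
    (is "?S powr p \<le> ?R")
proof (cases "?S = 0")
  case True
  then show ?thesis
    using p by (simp add: sum_nonneg)
next
  case False
  then have S: "0 < ?S"
    using x by (simp add: order_less_le sum_nonneg)
  let ?W = "\<Sum>i\<in>I. \<Sum>j\<in>I. c i j * sqrt (x i * x j)"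
  have "?S powr p = (\<Sum>i\<in>I. \<Sum>j\<in>I. x i * x j * ?S powr (p - 2))"
    using S by (rule powr_sum_eq_pair_sum)
  also have "\<dots> \<le> (\<Sum>i\<in>I. \<Sum>j\<in>I. (c i j powr (2 - p) * (x i * x j) powr (p / 2)
                     + (p - 2) * (c i j * sqrt (x i * x j) * ?S powr (p - 1))) / (p - 1))"
    using p x c S by (intro sum_mono young_interpolation_gt2) auto
  also have "\<dots> = (?R + (p - 2) * (?S powr (p - 1) * ?W)) / (p - 1)"
    by (simp add: sum_divide_distrib add_divide_distrib sum.distrib sum_distrib_left sum_distrib_right mult_ac)
  also have "\<dots> \<le> (?R + (p - 2) * ?S powr p) / (p - 1)"
    using p S weights by (intro divide_right_mono add_left_mono mult_left_mono powr_minus_one_mult_le) auto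
  finally show ?thesis
    using p by (simp add: field_simps)
qed

lemma weighted_pair_sum_le_powr_sum:
  fixes x :: "'i \<Rightarrow> real" and c :: "'i \<Rightarrow> 'i \<Rightarrow> real"
  assumes "finite I" and p: "1 < p" "p < 2"
    and x: "\<And>i. i \<in> I \<Longrightarrow> 0 \<le> x i" and c: "\<And>i j. i \<in> I \<Longrightarrow> j \<in> I \<Longrightarrow> 0 \<le> c i j"
    and weights: "(\<Sum>i\<in>I. \<Sum>j\<in>I. c i j * sqrt (x i * x j)) \<le> (\<Sum>i\<in>I. x i)"
  shows "(\<Sum>i\<in>I. \<Sum>j\<in>I. c i j powr (2 - p) * (x i * x j) powr (p / 2)) \<le> (\<Sum>i\<in>I. x i) powr p"
    (is "?R \<le> ?S powr p")
proof (cases "?S = 0")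
  case True
  then have "x i = 0" if "i \<in> I" for i
    using \<open>finite I\<close> x that sum_nonneg_eq_0_iff[of I x] by auto
  then show ?thesis
    using p True by simp
next
  case False
  then have S: "0 < ?S"
    using x by (simp add: order_less_le sum_nonneg)
  let ?W = "\<Sum>i\<in>I. \<Sum>j\<in>I. c i j * sqrt (x i * x j)"
  have "?R \<le> (\<Sum>i\<in>I. \<Sum>j\<in>I. (p - 1) * (x i * x j * ?S powr (p - 2))
                 + (2 - p) * (c i j * sqrt (x i * x j) * ?S powr (p - 1)))"
    using p x c S by (intro sum_mono young_interpolation_lt2) auto
  also have "\<dots> = (p - 1) * ?S powr p + (2 - p) * (?S powr (p - 1) * ?W)"
    unfolding powr_sum_eq_pair_sum[OF S, where p = p]
    by (simp add: sum.distrib sum_distrib_left sum_distrib_right mult_ac)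
  also have "\<dots> \<le> (p - 1) * ?S powr p + (2 - p) * ?S powr p"
    using p S weights by (intro add_left_mono mult_left_mono powr_minus_one_mult_le) auto
  finally show ?thesis
    by (simp add: algebra_simps)
qed

lemma sum_pairs_split_diagonal:
  assumes "finite I"
  shows "(\<Sum>i\<in>I. \<Sum>j\<in>I. g i j) = (\<Sum>i\<in>I. g i i) + (\<Sum>i\<in>I. \<Sum>j\<in>I - {i}. g i j)"
  using assms by (simp add: sum.remove sum.distrib)

lemma sum_pairs_if_diagonal:
  fixes h :: "real \<Rightarrow> real" and L :: "'i \<Rightarrow> 'i \<Rightarrow> real"
  assumes "finite I"
  shows "(\<Sum>i\<in>I. \<Sum>j\<in>I. h (if i = j then a else b) * L i j)
           = h a * (\<Sum>i\<in>I. L i i) + h b * (\<Sum>i\<in>I. \<Sum>j\<in>I - {i}. L i j)"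
proof -
  have "(\<Sum>i\<in>I. \<Sum>j\<in>I - {i}. h (if i = j then a else b) * L i j) = (\<Sum>i\<in>I. \<Sum>j\<in>I - {i}. h b * L i j)"
    by (intro sum.cong) auto
  then show ?thesis
    by (simp add: sum_pairs_split_diagonal[OF assms] sum_distrib_left)
qed

lemma sum_offdiagonal_sqrt_le:
  fixes x :: "'i \<Rightarrow> real"
  assumes "finite I" and x: "\<And>i. i \<in> I \<Longrightarrow> 0 \<le> x i"
  shows "(\<Sum>i\<in>I. \<Sum>j\<in>I - {i}. sqrt (x i * x j)) \<le> real (card I - 1) * (\<Sum>i\<in>I. x i)"
proof (cases "I = {}")
  case False
  have "(\<Sum>i\<in>I. \<Sum>j\<in>I - {i}. sqrt (x i * x j)) \<le> (\<Sum>i\<in>I. \<Sum>j\<in>I - {i}. (x i + x j) / 2)"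
    using x by (intro sum_mono arith_geo_mean_sqrt) auto
  also have "\<dots> = (\<Sum>i\<in>I. \<Sum>j\<in>I. (x i + x j) / 2) - (\<Sum>i\<in>I. x i)"
    using sum_pairs_split_diagonal[OF \<open>finite I\<close>, of "\<lambda>i j. (x i + x j) / 2"] by simp
  also have "(\<Sum>i\<in>I. \<Sum>j\<in>I. (x i + x j) / 2) = real (card I) * (\<Sum>i\<in>I. x i)"
    by (simp add: add_divide_distrib sum.distrib sum_divide_distrib[symmetric] sum_distrib_left[symmetric]
        sum.swap[of "\<lambda>i j. x j"])
  finally show ?thesis
    using False \<open>finite I\<close> by (simp add: of_nat_diff Suc_le_eq card_gt_0_iff algebra_simps)
qed simp

definition diagonal_weight :: "real \<Rightarrow> nat \<Rightarrow> 'i \<Rightarrow> 'i \<Rightarrow> real" where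
  "diagonal_weight \<theta> n i j = (if i = j then \<theta> else (1 - \<theta>) / real (n - 1))"

lemma diagonal_weight_pos:
  assumes "0 < \<theta>" "\<theta> < 1" "2 \<le> n"
  shows "0 < diagonal_weight \<theta> n i j"
  using assms by (simp add: diagonal_weight_def)

lemma diagonal_weight_nonneg:
  assumes "0 \<le> \<theta>" "\<theta> \<le> 1"
  shows "0 \<le> diagonal_weight \<theta> n i j"
  using assms by (simp add: diagonal_weight_def)

lemma sum_diagonal_weight_sqrt_le:
  fixes x :: "'i \<Rightarrow> real"
  assumes "finite I" "2 \<le> card I" "\<theta> \<le> 1" and x: "\<And>i. i \<in> I \<Longrightarrow> 0 \<le> x i"
  shows "(\<Sum>i\<in>I. \<Sum>j\<in>I. diagonal_weight \<theta> (card I) i j * sqrt (x i * x j)) \<le> (\<Sum>i\<in>I. x i)"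
proof -
  let ?b = "(1 - \<theta>) / real (card I - 1)"
  have "(\<Sum>i\<in>I. \<Sum>j\<in>I. diagonal_weight \<theta> (card I) i j * sqrt (x i * x j))
      = \<theta> * (\<Sum>i\<in>I. x i) + ?b * (\<Sum>i\<in>I. \<Sum>j\<in>I - {i}. sqrt (x i * x j))"
    using sum_pairs_if_diagonal[where h = "\<lambda>c. c", OF \<open>finite I\<close>] x by (simp add: diagonal_weight_def)
  also have "\<dots> \<le> \<theta> * (\<Sum>i\<in>I. x i) + ?b * (real (card I - 1) * (\<Sum>i\<in>I. x i))"
    using assms by (intro add_left_mono mult_left_mono sum_offdiagonal_sqrt_le) auto
  also have "\<dots> = (\<Sum>i\<in>I. x i)"
    using assms by (simp add: field_simps)
  finally show ?thesis .
qed

lemma powr_sum_le_card_powr_sum: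
  fixes x :: "'i \<Rightarrow> real"
  assumes "finite I" "I \<noteq> {}" and x: "\<And>i. i \<in> I \<Longrightarrow> 0 \<le> x i" and "0 \<le> p"
  shows "(\<Sum>i\<in>I. x i) powr p \<le> real (card I) powr p * (\<Sum>i\<in>I. x i powr p)"
proof -
  have "Max (x ` I) \<in> x ` I"
    using assms(1,2) by simp
  then obtain k where k: "k \<in> I" "x k = Max (x ` I)"
    by auto
  have "(\<Sum>i\<in>I. x i) \<le> real (card I) * x k"
    using assms(1) k by (intro sum_bounded_above) simp
  then have "(\<Sum>i\<in>I. x i) powr p \<le> (real (card I) * x k) powr p"
    using assms by (intro powr_mono2 sum_nonneg) auto
  also have "\<dots> = real (card I) powr p * x k powr p"
    using k x by (simp add: powr_mult)
  also have "\<dots> \<le> real (card I) powr p * (\<Sum>i\<in>I. x i powr p)"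
    using k assms by (intro mult_left_mono member_le_sum) auto
  finally show ?thesis .
qed

lemma powr_half_product_le:
  fixes x y :: real
  assumes "0 \<le> x" "0 \<le> y"
  shows "(x * y) powr (p / 2) \<le> (x powr p + y powr p) / 2"
proof -
  have "(x * y) powr (p / 2) = sqrt (x powr p * y powr p)"
    using assms by (simp add: powr_mult powr_powr powr_half_sqrt[symmetric])
  also have "\<dots> \<le> (x powr p + y powr p) / 2"
    by (intro arith_geo_mean_sqrt) auto
  finally show ?thesis .
qed

section \<open>Integrating the pointwise inequality\<close>

lemma lpow_nonneg: "0 \<le> lpow M q g"
  by (simp add: lpow_def)

lemma ennreal_lpow:
  assumes "(\<integral>\<^sup>+x. ennreal (\<bar>g x\<bar> powr q) \<partial>M) < \<infinity>"
  shows "ennreal (lpow M q g) = (\<integral>\<^sup>+x. ennreal (\<bar>g x\<bar> powr q) \<partial>M)"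
  using assms by (simp add: lpow_def)

lemma ennreal_sum_lpow:
  assumes "finite I" "\<And>i. i \<in> I \<Longrightarrow> (\<integral>\<^sup>+x. ennreal (\<bar>f i x\<bar> powr p) \<partial>M) < \<infinity>"
  shows "ennreal (\<Sum>i\<in>I. lpow M p (f i)) = (\<Sum>i\<in>I. \<integral>\<^sup>+x. ennreal (\<bar>f i x\<bar> powr p) \<partial>M)"
  using assms by (simp add: ennreal_lpow lpow_nonneg flip: sum_ennreal)

lemma lpow_square: "lpow M (p / 2) (\<lambda>x. g x * g x) = lpow M p g"
proof -
  have "\<bar>g x * g x\<bar> powr (p / 2) = \<bar>g x\<bar> powr p" for x
    by (simp add: abs_mult powr_mult powr_add[symmetric] del: abs_mult_self_eq)
  then show ?thesis
    by (simp add: lpow_def)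
qed

lemma nn_integral_sum_real:
  fixes h :: "'k \<Rightarrow> 'a \<Rightarrow> real"
  assumes "finite K" "\<And>k. k \<in> K \<Longrightarrow> h k \<in> borel_measurable M"
    and "\<And>k x. k \<in> K \<Longrightarrow> x \<in> space M \<Longrightarrow> 0 \<le> h k x"
    and "\<And>k. k \<in> K \<Longrightarrow> (\<integral>\<^sup>+x. ennreal (h k x) \<partial>M) = ennreal (v k)" "\<And>k. k \<in> K \<Longrightarrow> 0 \<le> v k"
  shows "(\<integral>\<^sup>+x. ennreal (\<Sum>k\<in>K. h k x) \<partial>M) = ennreal (\<Sum>k\<in>K. v k)"
proof -
  have "(\<integral>\<^sup>+x. ennreal (\<Sum>k\<in>K. h k x) \<partial>M) = (\<integral>\<^sup>+x. (\<Sum>k\<in>K. ennreal (h k x)) \<partial>M)"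
    using assms(3) by (intro nn_integral_cong) (simp add: sum_ennreal)
  also have "\<dots> = (\<Sum>k\<in>K. \<integral>\<^sup>+x. ennreal (h k x) \<partial>M)"
    using assms(2) by (intro nn_integral_sum) auto
  also have "\<dots> = ennreal (\<Sum>k\<in>K. v k)"
    using assms(4,5) by (simp add: sum_ennreal)
  finally show ?thesis .
qed

lemma nn_integral_mult_powr_abs:
  fixes g :: "'a \<Rightarrow> real"
  assumes "g \<in> borel_measurable M" "0 \<le> w" "(\<integral>\<^sup>+x. ennreal (\<bar>g x\<bar> powr q) \<partial>M) < \<infinity>"
  shows "(\<integral>\<^sup>+x. ennreal (w * \<bar>g x\<bar> powr q) \<partial>M) = ennreal (w * lpow M q g)"
proof -
  have "(\<integral>\<^sup>+x. ennreal (w * \<bar>g x\<bar> powr q) \<partial>M) = ennreal w * (\<integral>\<^sup>+x. ennreal (\<bar>g x\<bar> powr q) \<partial>M)"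
    using assms(1,2) by (simp add: ennreal_mult nn_integral_cmult measurable_abs_powr)
  also have "\<dots> = ennreal (w * lpow M q g)"
    using assms(2) by (simp add: ennreal_lpow[OF assms(3)] ennreal_mult lpow_nonneg)
  finally show ?thesis .
qed

lemma nn_integral_powr_half_product_less_top:
  fixes f g :: "'a \<Rightarrow> real"
  assumes "f \<in> borel_measurable M" "g \<in> borel_measurable M"
    and "(\<integral>\<^sup>+x. ennreal (\<bar>f x\<bar> powr p) \<partial>M) < \<infinity>" "(\<integral>\<^sup>+x. ennreal (\<bar>g x\<bar> powr p) \<partial>M) < \<infinity>"
  shows "(\<integral>\<^sup>+x. ennreal (\<bar>f x * g x\<bar> powr (p / 2)) \<partial>M) < \<infinity>"
proof -
  have "(\<integral>\<^sup>+x. ennreal (\<bar>f x * g x\<bar> powr (p / 2)) \<partial>M)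
      \<le> (\<integral>\<^sup>+x. ennreal (\<bar>f x\<bar> powr p) + ennreal (\<bar>g x\<bar> powr p) \<partial>M)"
  proof (intro nn_integral_mono)
    fix x
    have "\<bar>f x * g x\<bar> powr (p / 2) \<le> (\<bar>f x\<bar> powr p + \<bar>g x\<bar> powr p) / 2"
      using powr_half_product_le[of "\<bar>f x\<bar>" "\<bar>g x\<bar>" p] by (simp add: abs_mult)
    then have "\<bar>f x * g x\<bar> powr (p / 2) \<le> \<bar>f x\<bar> powr p + \<bar>g x\<bar> powr p"
      using powr_ge_zero[of "\<bar>f x\<bar>" p] powr_ge_zero[of "\<bar>g x\<bar>" p] by argo
    then show "ennreal (\<bar>f x * g x\<bar> powr (p / 2)) \<le> ennreal (\<bar>f x\<bar> powr p) + ennreal (\<bar>g x\<bar> powr p)"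
      by (simp flip: ennreal_plus)
  qed
  also have "\<dots> = (\<integral>\<^sup>+x. ennreal (\<bar>f x\<bar> powr p) \<partial>M) + (\<integral>\<^sup>+x. ennreal (\<bar>g x\<bar> powr p) \<partial>M)"
    using assms by (intro nn_integral_add) (auto intro: measurable_abs_powr)
  also have "\<dots> < \<infinity>"
    using assms by simp
  finally show ?thesis .
qed

lemma nn_integral_weighted_pair_sum:
  fixes f :: "'i \<Rightarrow> 'a \<Rightarrow> real" and w :: "'i \<Rightarrow> 'i \<Rightarrow> real"
  assumes "finite I" and meas: "\<And>i. i \<in> I \<Longrightarrow> f i \<in> borel_measurable M"
    and fin: "\<And>i. i \<in> I \<Longrightarrow> (\<integral>\<^sup>+x. ennreal (\<bar>f i x\<bar> powr p) \<partial>M) < \<infinity>"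
    and w: "\<And>i j. i \<in> I \<Longrightarrow> j \<in> I \<Longrightarrow> 0 \<le> w i j"
  shows "(\<integral>\<^sup>+x. ennreal (\<Sum>i\<in>I. \<Sum>j\<in>I. w i j * \<bar>f i x * f j x\<bar> powr (p / 2)) \<partial>M)
           = ennreal (\<Sum>i\<in>I. \<Sum>j\<in>I. w i j * lpow M (p / 2) (\<lambda>x. f i x * f j x))"
proof (rule nn_integral_sum_real[OF \<open>finite I\<close>])
  fix i assume i: "i \<in> I"
  have pair_integral: "(\<integral>\<^sup>+x. ennreal (w i j * \<bar>f i x * f j x\<bar> powr (p / 2)) \<partial>M)
      = ennreal (w i j * lpow M (p / 2) (\<lambda>x. f i x * f j x))" if j: "j \<in> I" for j
    using i j meas fin w by (intro nn_integral_mult_powr_abs nn_integral_powr_half_product_less_top) auto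
  show "(\<integral>\<^sup>+x. ennreal (\<Sum>j\<in>I. w i j * \<bar>f i x * f j x\<bar> powr (p / 2)) \<partial>M)
      = ennreal (\<Sum>j\<in>I. w i j * lpow M (p / 2) (\<lambda>x. f i x * f j x))"
    using i meas w pair_integral by (intro nn_integral_sum_real \<open>finite I\<close>) (auto intro!: mult_nonneg_nonneg lpow_nonneg)
  show "(\<lambda>x. \<Sum>j\<in>I. w i j * \<bar>f i x * f j x\<bar> powr (p / 2)) \<in> borel_measurable M"
    using i meas by (intro borel_measurable_sum borel_measurable_times measurable_abs_powr) auto
qed (use w in \<open>auto intro!: sum_nonneg mult_nonneg_nonneg lpow_nonneg\<close>)

lemma nn_integral_powr_sum_less_top:
  fixes f :: "'i \<Rightarrow> 'a \<Rightarrow> real"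
  assumes "finite I" "0 \<le> p" and meas: "\<And>i. i \<in> I \<Longrightarrow> f i \<in> borel_measurable M"
    and fin: "\<And>i. i \<in> I \<Longrightarrow> (\<integral>\<^sup>+x. ennreal (\<bar>f i x\<bar> powr p) \<partial>M) < \<infinity>"
  shows "(\<integral>\<^sup>+x. ennreal (\<bar>\<Sum>i\<in>I. f i x\<bar> powr p) \<partial>M) < \<infinity>"
proof (cases "I = {}")
  case False
  have "(\<integral>\<^sup>+x. ennreal (\<bar>\<Sum>i\<in>I. f i x\<bar> powr p) \<partial>M)
      \<le> (\<integral>\<^sup>+x. ennreal (real (card I) powr p) * (\<Sum>i\<in>I. ennreal (\<bar>f i x\<bar> powr p)) \<partial>M)"
  proof (intro nn_integral_mono)
    fix x
    have "\<bar>\<Sum>i\<in>I. f i x\<bar> powr p \<le> (\<Sum>i\<in>I. \<bar>f i x\<bar>) powr p"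
      using \<open>0 \<le> p\<close> by (intro powr_mono2) (auto intro: sum_abs)
    also have "\<dots> \<le> real (card I) powr p * (\<Sum>i\<in>I. \<bar>f i x\<bar> powr p)"
      using assms False by (intro powr_sum_le_card_powr_sum) auto
    finally have "ennreal (\<bar>\<Sum>i\<in>I. f i x\<bar> powr p)
        \<le> ennreal (real (card I) powr p * (\<Sum>i\<in>I. \<bar>f i x\<bar> powr p))"
      by (rule ennreal_leI)
    then show "ennreal (\<bar>\<Sum>i\<in>I. f i x\<bar> powr p)
        \<le> ennreal (real (card I) powr p) * (\<Sum>i\<in>I. ennreal (\<bar>f i x\<bar> powr p))"
      by (simp add: ennreal_mult sum_nonneg)
  qed
  also have "\<dots> = ennreal (real (card I) powr p) * (\<Sum>i\<in>I. \<integral>\<^sup>+x. ennreal (\<bar>f i x\<bar> powr p) \<partial>M)"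
    using meas by (simp add: nn_integral_cmult nn_integral_sum measurable_abs_powr del: sum_ennreal)
  also have "\<dots> < \<infinity>"
    using fin \<open>finite I\<close> by (simp add: ennreal_mult_less_top less_top)
  finally show ?thesis .
qed simp

lemma lpow_sum_le_weighted_pair_sum:
  fixes f :: "'i \<Rightarrow> 'a \<Rightarrow> real" and c :: "'i \<Rightarrow> 'i \<Rightarrow> real"
  assumes "finite I" "2 < p"
    and meas: "\<And>i. i \<in> I \<Longrightarrow> f i \<in> borel_measurable M"
    and nonneg: "\<And>i x. i \<in> I \<Longrightarrow> x \<in> space M \<Longrightarrow> 0 \<le> f i x"
    and fin: "\<And>i. i \<in> I \<Longrightarrow> (\<integral>\<^sup>+x. ennreal (\<bar>f i x\<bar> powr p) \<partial>M) < \<infinity>"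
    and c: "\<And>i j. i \<in> I \<Longrightarrow> j \<in> I \<Longrightarrow> 0 < c i j"
    and weights: "\<And>x. x \<in> space M \<Longrightarrow>
      (\<Sum>i\<in>I. \<Sum>j\<in>I. c i j * sqrt (f i x * f j x)) \<le> (\<Sum>i\<in>I. f i x)"
  shows "lpow M p (\<lambda>x. \<Sum>i\<in>I. f i x)
           \<le> (\<Sum>i\<in>I. \<Sum>j\<in>I. c i j powr (2 - p) * lpow M (p / 2) (\<lambda>x. f i x * f j x))"
proof -
  have "(\<integral>\<^sup>+x. ennreal (\<bar>\<Sum>i\<in>I. f i x\<bar> powr p) \<partial>M)
      \<le> (\<integral>\<^sup>+x. ennreal (\<Sum>i\<in>I. \<Sum>j\<in>I. c i j powr (2 - p) * \<bar>f i x * f j x\<bar> powr (p / 2)) \<partial>M)"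
  proof (intro nn_integral_mono ennreal_leI)
    fix x assume x: "x \<in> space M"
    have "\<bar>\<Sum>i\<in>I. f i x\<bar> powr p = (\<Sum>i\<in>I. f i x) powr p"
      using nonneg x by (simp add: sum_nonneg)
    also have "\<dots> \<le> (\<Sum>i\<in>I. \<Sum>j\<in>I. c i j powr (2 - p) * (f i x * f j x) powr (p / 2))"
      using assms x by (intro powr_sum_le_weighted_pair_sum) auto
    also have "\<dots> = (\<Sum>i\<in>I. \<Sum>j\<in>I. c i j powr (2 - p) * \<bar>f i x * f j x\<bar> powr (p / 2))"
      using nonneg x by (intro sum.cong refl) simp
    finally show "\<bar>\<Sum>i\<in>I. f i x\<bar> powr p \<le> \<dots>" .
  qed
  also have "\<dots> = ennreal (\<Sum>i\<in>I. \<Sum>j\<in>I. c i j powr (2 - p) * lpow M (p / 2) (\<lambda>x. f i x * f j x))"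
    using assms by (intro nn_integral_weighted_pair_sum) auto
  finally show ?thesis
    unfolding lpow_def[of M p] by (intro enn2real_leI sum_nonneg mult_nonneg_nonneg lpow_nonneg) auto
qed

lemma weighted_pair_sum_le_lpow_sum:
  fixes f :: "'i \<Rightarrow> 'a \<Rightarrow> real" and c :: "'i \<Rightarrow> 'i \<Rightarrow> real"
  assumes "finite I" "1 < p" "p < 2"
    and meas: "\<And>i. i \<in> I \<Longrightarrow> f i \<in> borel_measurable M"
    and nonneg: "\<And>i x. i \<in> I \<Longrightarrow> x \<in> space M \<Longrightarrow> 0 \<le> f i x"
    and fin: "\<And>i. i \<in> I \<Longrightarrow> (\<integral>\<^sup>+x. ennreal (\<bar>f i x\<bar> powr p) \<partial>M) < \<infinity>"
    and c: "\<And>i j. i \<in> I \<Longrightarrow> j \<in> I \<Longrightarrow> 0 \<le> c i j"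
    and weights: "\<And>x. x \<in> space M \<Longrightarrow>
      (\<Sum>i\<in>I. \<Sum>j\<in>I. c i j * sqrt (f i x * f j x)) \<le> (\<Sum>i\<in>I. f i x)"
  shows "(\<Sum>i\<in>I. \<Sum>j\<in>I. c i j powr (2 - p) * lpow M (p / 2) (\<lambda>x. f i x * f j x))
           \<le> lpow M p (\<lambda>x. \<Sum>i\<in>I. f i x)"
proof -
  have "ennreal (\<Sum>i\<in>I. \<Sum>j\<in>I. c i j powr (2 - p) * lpow M (p / 2) (\<lambda>x. f i x * f j x))
      = (\<integral>\<^sup>+x. ennreal (\<Sum>i\<in>I. \<Sum>j\<in>I. c i j powr (2 - p) * \<bar>f i x * f j x\<bar> powr (p / 2)) \<partial>M)"
    using assms by (intro nn_integral_weighted_pair_sum[symmetric]) auto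
  also have "\<dots> \<le> (\<integral>\<^sup>+x. ennreal (\<bar>\<Sum>i\<in>I. f i x\<bar> powr p) \<partial>M)"
  proof (intro nn_integral_mono ennreal_leI)
    fix x assume x: "x \<in> space M"
    have "(\<Sum>i\<in>I. \<Sum>j\<in>I. c i j powr (2 - p) * \<bar>f i x * f j x\<bar> powr (p / 2))
        = (\<Sum>i\<in>I. \<Sum>j\<in>I. c i j powr (2 - p) * (f i x * f j x) powr (p / 2))"
      using nonneg x by (intro sum.cong refl) simp
    also have "\<dots> \<le> (\<Sum>i\<in>I. f i x) powr p"
      using assms x by (intro weighted_pair_sum_le_powr_sum) auto
    also have "\<dots> = \<bar>\<Sum>i\<in>I. f i x\<bar> powr p"
      using nonneg x by (simp add: sum_nonneg)
    finally show "(\<Sum>i\<in>I. \<Sum>j\<in>I. c i j powr (2 - p) * \<bar>f i x * f j x\<bar> powr (p / 2)) \<le> \<dots>" .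
  qed
  \<comment> \<open>\<open>enn2real\<close> sends \<open>\<infinity>\<close> to 0, so here the integral of the sum must be finite.\<close>
  finally have "enn2real (ennreal (\<Sum>i\<in>I. \<Sum>j\<in>I. c i j powr (2 - p) * lpow M (p / 2) (\<lambda>x. f i x * f j x)))
      \<le> lpow M p (\<lambda>x. \<Sum>i\<in>I. f i x)"
    unfolding lpow_def[of M p] by (rule enn2real_mono) (use assms nn_integral_powr_sum_less_top[of I p f M] in auto)
  then show ?thesis
    by (simp add: sum_nonneg lpow_nonneg c)
qed

section \<open>Optimising the diagonal weight\<close>

lemma sum_offdiagonal_symmetric:
  fixes g :: "nat \<Rightarrow> nat \<Rightarrow> real"
  assumes sym: "\<And>i j. g i j = g j i"
  shows "(\<Sum>i\<in>{1..N}. \<Sum>j\<in>{1..N} - {i}. g i j) = 2 * (\<Sum>i\<in>{1..N}. \<Sum>j\<in>{i<..N}. g i j)"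
proof -
  have split: "(\<Sum>i\<in>{1..N}. \<Sum>j\<in>{1..N} - {i}. g i j)
      = (\<Sum>i\<in>{1..N}. \<Sum>j\<in>{j\<in>{1..N}. j < i}. g i j) + (\<Sum>i\<in>{1..N}. \<Sum>j\<in>{i<..N}. g i j)"
    unfolding sum.distrib[symmetric]
  proof (rule sum.cong[OF refl])
    fix i assume "i \<in> {1..N}"
    then have "{1..N} - {i} = {j\<in>{1..N}. j < i} \<union> {i<..N}"
      by auto
    moreover have "{j\<in>{1..N}. j < i} \<inter> {i<..N} = {}"
      by auto
    ultimately show "(\<Sum>j\<in>{1..N} - {i}. g i j) = (\<Sum>j\<in>{j\<in>{1..N}. j < i}. g i j) + (\<Sum>j\<in>{i<..N}. g i j)"
      by (simp add: sum.union_disjoint)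
  qed
  have "(\<Sum>i\<in>{1..N}. \<Sum>j\<in>{j\<in>{1..N}. j < i}. g i j) = (\<Sum>j\<in>{1..N}. \<Sum>i\<in>{i\<in>{1..N}. j < i}. g i j)"
    by (rule sum.swap_restrict) auto
  also have "\<dots> = (\<Sum>j\<in>{1..N}. \<Sum>i\<in>{j<..N}. g j i)"
  proof (rule sum.cong[OF refl])
    fix j assume "j \<in> {1..N}"
    then have "{i\<in>{1..N}. j < i} = {j<..N}"
      by auto
    then show "(\<Sum>i\<in>{i\<in>{1..N}. j < i}. g i j) = (\<Sum>i\<in>{j<..N}. g j i)"
      by (simp add: sym)
  qed
  finally show ?thesis
    unfolding split by simp
qed

lemma real_choose_two: "real (N choose 2) = real N * real (N - 1) / 2"
proof -
  have "even (N * (N - 1))"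
    by auto
  then have "(N choose 2) * 2 = N * (N - 1)"
    by (simp add: choose_two)
  then have "real (N choose 2) * 2 = real N * real (N - 1)"
    by (metis of_nat_mult of_nat_numeral)
  then show ?thesis
    by simp
qed

lemma offdiagonal_lpow_sum_eq_Gamma_tilde:
  assumes "2 \<le> N" and A: "0 < (\<Sum>j\<in>{1..N}. lpow M p (f j))"
  shows "(\<Sum>i\<in>{1..N}. \<Sum>j\<in>{1..N} - {i}. lpow M (p / 2) (\<lambda>x. f i x * f j x))
           = real (N - 1) * Gamma_tilde M p N f * (\<Sum>j\<in>{1..N}. lpow M p (f j))"
proof -
  have "(\<Sum>i\<in>{1..N}. \<Sum>j\<in>{1..N} - {i}. lpow M (p / 2) (\<lambda>x. f i x * f j x))
      = 2 * (\<Sum>i\<in>{1..N}. \<Sum>j\<in>{i<..N}. lpow M (p / 2) (\<lambda>x. f i x * f j x))"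
    by (subst sum_offdiagonal_symmetric) (simp_all add: mult.commute)
  then show ?thesis
    using assms by (simp add: Gamma_tilde_def real_choose_two of_nat_diff field_simps)
qed

lemma Gamma_tilde_nonneg: "0 \<le> Gamma_tilde M p N f"
  by (simp add: Gamma_tilde_def sum_nonneg lpow_nonneg)

lemma sum_diagonal_weight_lpow_eq_Gamma_tilde:
  assumes "2 \<le> N" and A: "0 < (\<Sum>j\<in>{1..N}. lpow M p (f j))"
  shows "(\<Sum>i\<in>{1..N}. \<Sum>j\<in>{1..N}. diagonal_weight \<theta> N i j powr (2 - p) * lpow M (p / 2) (\<lambda>x. f i x * f j x))
           = \<theta> powr (2 - p) * (\<Sum>j\<in>{1..N}. lpow M p (f j))
             + ((1 - \<theta>) / real (N - 1)) powr (2 - p)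
               * (real (N - 1) * Gamma_tilde M p N f * (\<Sum>j\<in>{1..N}. lpow M p (f j)))"
  unfolding diagonal_weight_def sum_pairs_if_diagonal[where h = "\<lambda>c. c powr (2 - p)", OF finite_atLeastAtMost]
    lpow_square offdiagonal_lpow_sum_eq_Gamma_tilde[OF assms] ..

lemma weighted_bound_at_optimum:
  fixes p G n A :: real
  assumes "p \<noteq> 1" "0 < G" "0 < n"
  defines "K \<equiv> 1 + n * G powr (1 / (p - 1))"
  shows "(1 / K) powr (2 - p) * A + ((1 - 1 / K) / n) powr (2 - p) * (n * G * A) = K powr (p - 1) * A"
proof -
  define t where "t = G powr (1 / (p - 1))"
  have t: "0 < t" and G: "G = t powr (p - 1)"
    using assms(1,2) by (simp_all add: t_def powr_powr)
  have K: "0 < K" "K = 1 + n * t"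
    using t assms(3) by (simp_all add: K_def t_def add_pos_pos)
  have Kpow: "1 / K powr (2 - p) = K powr (p - 2)"
    by (metis minus_diff_eq powr_minus_divide)
  have inv: "(1 / K) powr (2 - p) = K powr (p - 2)"
    using K(1) by (simp add: powr_divide Kpow)
  have "1 - 1 / K = n * t / K"
    using K by (simp add: field_simps)
  then have "(1 - 1 / K) / n = t / K"
    using assms(3) by simp
  moreover have "t powr (2 - p) * t powr (p - 1) = t"
    using t by (simp add: powr_add[symmetric])
  ultimately have "((1 - 1 / K) / n) powr (2 - p) * G = K powr (p - 2) * t"
    using t K(1) by (simp add: G powr_divide flip: Kpow)
  then have "(1 / K) powr (2 - p) * A + ((1 - 1 / K) / n) powr (2 - p) * (n * G * A)
      = K powr (p - 2) * (1 + n * t) * A"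
    by (simp add: inv algebra_simps)
  also have "K powr (p - 2) * (1 + n * t) = K powr (p - 1)"
    using K(1) powr_add[of K "p - 2" 1] by (simp flip: K(2))
  finally show ?thesis .
qed

lemma le_weighted_bound_optimum:
  fixes p G n A Z :: real
  assumes p: "2 < p" and G: "0 \<le> G" and n: "0 < n"
    and bound: "\<And>\<theta>. 0 < \<theta> \<Longrightarrow> \<theta> < 1 \<Longrightarrow>
      Z \<le> \<theta> powr (2 - p) * A + ((1 - \<theta>) / n) powr (2 - p) * (n * G * A)"
  shows "Z \<le> (1 + n * G powr (1 / (p - 1))) powr (p - 1) * A"
proof (cases "G = 0")
  case True
  \<comment> \<open>The optimal weight is then \<open>\<theta> = 1\<close>, which the hypothesis excludes; pass to the limit.\<close>
  have "((\<lambda>\<theta>. \<theta> powr (2 - p) * A) \<longlongrightarrow> 1 powr (2 - p) * A) (at_left 1)"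
    by (intro tendsto_intros) auto
  moreover have "\<forall>\<^sub>F \<theta> in at_left 1. Z \<le> \<theta> powr (2 - p) * A"
    using eventually_at_left_real[OF zero_less_one] by (rule eventually_mono) (use bound True in auto)
  ultimately have "Z \<le> 1 powr (2 - p) * A"
    using trivial_limit_at_left_real by (rule tendsto_lowerbound)
  then show ?thesis
    using True by simp
next
  case False
  define K where "K = 1 + n * G powr (1 / (p - 1))"
  have K: "1 < K"
    using False G n by (simp add: K_def)
  have "Z \<le> (1 / K) powr (2 - p) * A + ((1 - 1 / K) / n) powr (2 - p) * (n * G * A)"
    using K by (intro bound) auto
  also have "\<dots> = K powr (p - 1) * A"
    unfolding K_def using p G False n by (intro weighted_bound_at_optimum) auto
  finally show ?thesis
    unfolding K_def .
qed

lemma weighted_bound_optimum_le: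
  fixes p G n A Z :: real
  assumes p: "1 < p" and G: "0 \<le> G" and n: "0 < n"
    and bound: "\<And>\<theta>. 0 < \<theta> \<Longrightarrow> \<theta> \<le> 1 \<Longrightarrow>
      \<theta> powr (2 - p) * A + ((1 - \<theta>) / n) powr (2 - p) * (n * G * A) \<le> Z"
  shows "(1 + n * G powr (1 / (p - 1))) powr (p - 1) * A \<le> Z"
proof (cases "G = 0")
  case True
  then show ?thesis
    using bound[of 1] by simp
next
  case False
  define K where "K = 1 + n * G powr (1 / (p - 1))"
  have K: "1 < K"
    using False G n by (simp add: K_def)
  have "K powr (p - 1) * A = (1 / K) powr (2 - p) * A + ((1 - 1 / K) / n) powr (2 - p) * (n * G * A)"
    unfolding K_def using p G False n by (intro weighted_bound_at_optimum[symmetric]) auto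
  also have "\<dots> \<le> Z"
    using K by (intro bound) auto
  finally show ?thesis
    unfolding K_def .
qed

lemma lpow_sum_le_Gamma_tilde_bound:
  fixes f :: "nat \<Rightarrow> 'a \<Rightarrow> real"
  assumes N: "2 \<le> N" and p: "2 < p"
    and meas: "\<And>j. j \<in> {1..N} \<Longrightarrow> f j \<in> borel_measurable M"
    and nonneg: "\<And>j x. j \<in> {1..N} \<Longrightarrow> x \<in> space M \<Longrightarrow> 0 \<le> f j x"
    and fin: "\<And>j. j \<in> {1..N} \<Longrightarrow> (\<integral>\<^sup>+x. ennreal (\<bar>f j x\<bar> powr p) \<partial>M) < \<infinity>"
    and A: "0 < (\<Sum>j\<in>{1..N}. lpow M p (f j))"
  shows "lpow M p (\<lambda>x. \<Sum>j\<in>{1..N}. f j x)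
           \<le> (1 + real (N - 1) * Gamma_tilde M p N f powr (1 / (p - 1))) powr (p - 1)
               * (\<Sum>j\<in>{1..N}. lpow M p (f j))"
proof (rule le_weighted_bound_optimum[OF p Gamma_tilde_nonneg])
  fix \<theta> :: real assume \<theta>: "0 < \<theta>" "\<theta> < 1"
  show "lpow M p (\<lambda>x. \<Sum>j\<in>{1..N}. f j x)
      \<le> \<theta> powr (2 - p) * (\<Sum>j\<in>{1..N}. lpow M p (f j)) + ((1 - \<theta>) / real (N - 1)) powr (2 - p)
          * (real (N - 1) * Gamma_tilde M p N f * (\<Sum>j\<in>{1..N}. lpow M p (f j)))"
    unfolding sum_diagonal_weight_lpow_eq_Gamma_tilde[OF N A, symmetric]
    using p meas nonneg fin \<theta> N sum_diagonal_weight_sqrt_le[of "{1..N}" \<theta>]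
    by (intro lpow_sum_le_weighted_pair_sum diagonal_weight_pos) auto
qed (use N in simp)

lemma Gamma_tilde_bound_le_lpow_sum:
  fixes f :: "nat \<Rightarrow> 'a \<Rightarrow> real"
  assumes N: "2 \<le> N" and p: "1 < p" "p < 2"
    and meas: "\<And>j. j \<in> {1..N} \<Longrightarrow> f j \<in> borel_measurable M"
    and nonneg: "\<And>j x. j \<in> {1..N} \<Longrightarrow> x \<in> space M \<Longrightarrow> 0 \<le> f j x"
    and fin: "\<And>j. j \<in> {1..N} \<Longrightarrow> (\<integral>\<^sup>+x. ennreal (\<bar>f j x\<bar> powr p) \<partial>M) < \<infinity>"
    and A: "0 < (\<Sum>j\<in>{1..N}. lpow M p (f j))"
  shows "(1 + real (N - 1) * Gamma_tilde M p N f powr (1 / (p - 1))) powr (p - 1)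
           * (\<Sum>j\<in>{1..N}. lpow M p (f j))
         \<le> lpow M p (\<lambda>x. \<Sum>j\<in>{1..N}. f j x)"
proof (rule weighted_bound_optimum_le[OF p(1) Gamma_tilde_nonneg])
  fix \<theta> :: real assume \<theta>: "0 < \<theta>" "\<theta> \<le> 1"
  show "\<theta> powr (2 - p) * (\<Sum>j\<in>{1..N}. lpow M p (f j)) + ((1 - \<theta>) / real (N - 1)) powr (2 - p)
          * (real (N - 1) * Gamma_tilde M p N f * (\<Sum>j\<in>{1..N}. lpow M p (f j)))
      \<le> lpow M p (\<lambda>x. \<Sum>j\<in>{1..N}. f j x)"
    unfolding sum_diagonal_weight_lpow_eq_Gamma_tilde[OF N A, symmetric]
    using p meas nonneg fin \<theta> N sum_diagonal_weight_sqrt_le[of "{1..N}" \<theta>]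
    by (intro weighted_pair_sum_le_lpow_sum diagonal_weight_nonneg) auto
qed (use N in simp)

theorem corollary1p2:
  fixes M :: "'a measure" and N :: nat and f :: "nat \<Rightarrow> 'a \<Rightarrow> real"
  assumes N: "N \<ge> 2"
    and meas: "\<And>j. j \<in> {1..N} \<Longrightarrow> f j \<in> borel_measurable M"
    and nonneg: "\<And>j x. j \<in> {1..N} \<Longrightarrow> x \<in> space M \<Longrightarrow> f j x \<ge> 0"
    and pos: "0 < (\<Sum>j\<in>{1..N}. \<integral>\<^sup>+ x. ennreal (\<bar>f j x\<bar> powr p) \<partial>M)"
    and fin: "(\<Sum>j\<in>{1..N}. \<integral>\<^sup>+ x. ennreal (\<bar>f j x\<bar> powr p) \<partial>M) < \<infinity>"
  shows "(2 < p \<longrightarrow>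
            lpow M p (\<lambda>x. \<Sum>j\<in>{1..N}. f j x)
              \<le> (1 + real (N - 1) * Gamma_tilde M p N f powr (1 / (p - 1))) powr (p - 1)
                  * (\<Sum>j\<in>{1..N}. lpow M p (f j)))
       \<and> (1 < p \<and> p < 2 \<longrightarrow>
            lpow M p (\<lambda>x. \<Sum>j\<in>{1..N}. f j x)
              \<ge> (1 + real (N - 1) * Gamma_tilde M p N f powr (1 / (p - 1))) powr (p - 1)
                  * (\<Sum>j\<in>{1..N}. lpow M p (f j)))"
proof -
  have fin_j: "(\<integral>\<^sup>+x. ennreal (\<bar>f j x\<bar> powr p) \<partial>M) < \<infinity>" if "j \<in> {1..N}" for j
    using fin that by (simp add: less_top)
  have "ennreal (\<Sum>j\<in>{1..N}. lpow M p (f j)) = (\<Sum>j\<in>{1..N}. \<integral>\<^sup>+x. ennreal (\<bar>f j x\<bar> powr p) \<partial>M)"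
    using fin_j by (rule ennreal_sum_lpow[OF finite_atLeastAtMost])
  with pos have "0 < (\<Sum>j\<in>{1..N}. lpow M p (f j))"
    by (metis ennreal_less_zero_iff)
  then show ?thesis
    using lpow_sum_le_Gamma_tilde_bound[OF N _ meas nonneg fin_j]
      Gamma_tilde_bound_le_lpow_sum[OF N _ _ meas nonneg fin_j] by auto
qed

end
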